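(* Let $k\geqslant 2$ and $m_1,\ldots,m_k\geqslant 4$. Write $S^{m_i}=\{(\mathbf{x}_i,q_i):\mathbf{x}_i\in\mathbb{R}^{m_i-3},\ q_i\in\mathbb{H},\ |\mathbf{x}_i|^2+|q_i|^2=1\}$. Let the quaternionic torus $\mathrm{Sp}(1)^{k-1}$ act on $S^{m_1}\times\cdots\times S^{m_k}$ by \[ (r_1,\ldots,r_{k-1})\cdot((\mathbf{x}_1,q_1),\ldots,(\mathbf{x}_k,q_k))=((\mathbf{x}_1,q_1r_1^{-1}),(\mathbf{x}_2,r_1q_2r_2^{-1}),\ldots,(\mathbf{x}_{k-1},r_{k-2}q_{k-1}r_{k-1}^{-1}),(\mathbf{x}_k,r_{k-1}q_k)). \] Then the orbit space $(S^{m_1}\times\cdots\times S^{m_k})/\mathrm{Sp}(1)^{k-1}$ is homeomorphic to the sphere $S^m$, $m=m_1+\cdots+m_k-3(k-1)$, and the canonical projection onto the orbit space is given by \[ ((\mathbf{x}_1,q_1),\ldots,(\mathbf{x}_k,q_k))\mapsto\frac{(\mathbf{x}_1,\ldots,\mathbf{x}_k,q_1q_2\cdots q_k)}{\sqrt{|\mathbf{x}_1|^2+\cdots+|\mathbf{x}_k|^2+|q_1q_2\cdots q_k|^2}}\in S^m\subset\mathbb{R}^{m_1-3}\times\cdots\times\mathbb{R}^{m_k-3}\times\mathbb{H}. \]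
   Context: $\mathbb{H}$ is the algebra of quaternions with its Euclidean norm; $\mathrm{Sp}(1)$ is the group of unit quaternions. *)

theory Defs
  imports "HOL-Analysis.Analysis"
begin

text \<open>Quaternions: H = R^4 represented as nested real tuples (a,b,c,d) = a + b i + c j + d k.
  The product-type norm on real \<times> real \<times> real \<times> real is the Euclidean norm
  sqrt(a^2+b^2+c^2+d^2), which is the quaternionic norm.\<close>

type_synonym quat = "real \<times> real \<times> real \<times> real"

definition hone :: quat where "hone = (1, 0, 0, 0)"

definition hmult :: "quat \<Rightarrow> quat \<Rightarrow> quat" where
  "hmult p q = (case p of (a1, b1, c1, d1) \<Rightarrow> case q of (a2, b2, c2, d2) \<Rightarrow>
     (a1*a2 - b1*b2 - c1*c2 - d1*d2,
      a1*b2 + b1*a2 + c1*d2 - d1*c2,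
      a1*c2 - b1*d2 + c1*a2 + d1*b2,
      a1*d2 + b1*c2 - c1*b2 + d1*a2))"

definition hcnj :: "quat \<Rightarrow> quat" where
  "hcnj q = (case q of (a, b, c, d) \<Rightarrow> (a, -b, -c, -d))"

definition hinverse :: "quat \<Rightarrow> quat" where
  "hinverse q = (1 / (norm q)\<^sup>2) *\<^sub>R hcnj q"

definition hprod :: "quat list \<Rightarrow> quat" where
  "hprod qs = foldr hmult qs hone"

text \<open>Components are indexed 0..k-1 (the paper's 1..k).  A point of
  S^{m_1} x ... x S^{m_k} is p :: nat => (nat => real) x quat, where fst (p i) is the vector
  x_i in R^{m_i - 3} (coordinates 0..m_i-4, all other coordinates 0) and snd (p i) = q_i;
  p i = (0,0) for i >= k.  The topology is the (product) topology of the function space,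
  restricted to this set.\<close>

definition sphere_prod :: "nat \<Rightarrow> (nat \<Rightarrow> nat) \<Rightarrow> (nat \<Rightarrow> (nat \<Rightarrow> real) \<times> quat) set" where
  "sphere_prod k m = {p. (\<forall>i. k \<le> i \<longrightarrow> p i = ((\<lambda>_. 0), 0)) \<and>
      (\<forall>i<k. (\<forall>j. m i - 3 \<le> j \<longrightarrow> fst (p i) j = 0) \<and>
             (\<Sum>j<m i - 3. (fst (p i) j)\<^sup>2) + (norm (snd (p i)))\<^sup>2 = 1)}"

definition target_sphere :: "nat \<Rightarrow> (nat \<Rightarrow> nat) \<Rightarrow> ((nat \<Rightarrow> nat \<Rightarrow> real) \<times> quat) set" where
  "target_sphere k m = {y. (\<forall>i j. (k \<le> i \<or> m i - 3 \<le> j) \<longrightarrow> fst y i j = 0) \<and>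
      (\<Sum>i<k. \<Sum>j<m i - 3. (fst y i j)\<^sup>2) + (norm (snd y))\<^sup>2 = 1}"

definition qt_act :: "nat \<Rightarrow> (nat \<Rightarrow> quat) \<Rightarrow> (nat \<Rightarrow> (nat \<Rightarrow> real) \<times> quat) \<Rightarrow> (nat \<Rightarrow> (nat \<Rightarrow> real) \<times> quat)" where
  "qt_act k r p = (\<lambda>i. if i < k then
      (fst (p i), hmult (hmult (if i = 0 then hone else r (i - 1)) (snd (p i)))
                        (hinverse (if i = k - 1 then hone else r i)))
    else p i)"

definition unit_tuples :: "nat \<Rightarrow> (nat \<Rightarrow> quat) set" where
  "unit_tuples k = {r. \<forall>i<k - 1. norm (r i) = 1}"

definition orbit_proj :: "nat \<Rightarrow> (nat \<Rightarrow> nat) \<Rightarrow> (nat \<Rightarrow> (nat \<Rightarrow> real) \<times> quat) \<Rightarrow> (nat \<Rightarrow> nat \<Rightarrow> real) \<times> quat" where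
  "orbit_proj k m p =
    (let Q = hprod (map (\<lambda>i. snd (p i)) [0..<k]);
         N = sqrt ((\<Sum>i<k. \<Sum>j<m i - 3. (fst (p i) j)\<^sup>2) + (norm Q)\<^sup>2)
     in ((\<lambda>i j. fst (p i) j / N), (1 / N) *\<^sub>R Q))"

end

theory Submission
  imports Defs
begin

text \<open>The projection is invariant because under the action the product \<open>q\<^sub>1 \<cdots> q\<^sub>k\<close>
  telescopes. Conversely, if two points have the same image, their data
  \<open>(x\<^sub>1, \<dots>, x\<^sub>k, q\<^sub>1 \<cdots> q\<^sub>k)\<close> are positively proportional; as every factor lies on a unit
  sphere and the norm of the product is the product of the norms, the proportionality factor
  is \<open>1\<close>. Hence the \<open>x\<^sub>i\<close> and the norms \<open>|q\<^sub>i|\<close> agree, and two tuples of quaternions with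
  equal norms and equal products differ by a gauge transformation
  \<open>q\<^sub>i \<mapsto> a\<^sub>i q\<^sub>i a\<^sub>i\<^sub>+\<^sub>1\<^sup>-\<^sup>1\<close> with unit \<open>a\<^sub>i\<close> and \<open>a\<^sub>0 = a\<^sub>k = 1\<close>.
  For surjectivity, a target point \<open>(y, Y)\<close> is the image of \<open>(t y, q)\<close> with all \<open>q\<^sub>i\<close> real
  except the last, where the scale \<open>t\<close> is found by the intermediate value theorem.
  Finally a continuous surjection from a compact space onto a Hausdorff space is a quotient map.\<close>

notation hmult (infixl "\<star>" 70)

subsection \<open>Quaternion algebra\<close>

lemma norm_quat_sq: "(norm ((a, b, c, d) :: quat))\<^sup>2 = a\<^sup>2 + b\<^sup>2 + c\<^sup>2 + d\<^sup>2"
  by (simp add: norm_Pair)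

lemma hmult_assoc: "(p \<star> q) \<star> r = p \<star> (q \<star> r)"
  by (cases p rule: prod_cases4; cases q rule: prod_cases4; cases r rule: prod_cases4)
     (simp add: hmult_def algebra_simps)

lemma hmult_hone [simp]: "hone \<star> p = p" "p \<star> hone = p"
  by (cases p rule: prod_cases4; simp add: hmult_def hone_def)+

lemma hmult_zero [simp]: "0 \<star> p = 0" "p \<star> 0 = 0"
  by (cases p rule: prod_cases4; simp add: hmult_def zero_prod_def)+

lemma hmult_scaleR [simp]: "(c *\<^sub>R p) \<star> q = c *\<^sub>R (p \<star> q)" "p \<star> (c *\<^sub>R q) = c *\<^sub>R (p \<star> q)"
  by (cases p rule: prod_cases4; cases q rule: prod_cases4; simp add: hmult_def algebra_simps)+

lemma norm_hmult_sq: "(norm (p \<star> q))\<^sup>2 = (norm p)\<^sup>2 * (norm q)\<^sup>2"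
proof (cases p rule: prod_cases4)
  case (fields a b c d)
  then show ?thesis
  proof (cases q rule: prod_cases4)
    case (fields e f g h)
    show ?thesis unfolding \<open>p = _\<close> \<open>q = _\<close> hmult_def
      by (simp only: prod.case norm_quat_sq) algebra
  qed
qed

lemma norm_hmult: "norm (p \<star> q) = norm p * norm q"
  by (metis norm_hmult_sq norm_ge_zero power_mult_distrib zero_le_mult_iff power2_eq_imp_eq)

lemma hmult_eq_0_iff [simp]: "p \<star> q = 0 \<longleftrightarrow> p = 0 \<or> q = 0"
  by (metis norm_eq_zero norm_hmult mult_eq_0_iff)

lemma hmult_hcnj: "p \<star> hcnj p = (norm p)\<^sup>2 *\<^sub>R hone" "hcnj p \<star> p = (norm p)\<^sup>2 *\<^sub>R hone"
proof -
  obtain a b c d where p: "p = (a, b, c, d)"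
    by (metis prod_cases4)
  show "p \<star> hcnj p = (norm p)\<^sup>2 *\<^sub>R hone" "hcnj p \<star> p = (norm p)\<^sup>2 *\<^sub>R hone"
    unfolding p hmult_def hcnj_def hone_def norm_quat_sq
    by (simp_all add: algebra_simps power2_eq_square)
qed

lemma hcnj_hmult: "hcnj (p \<star> q) = hcnj q \<star> hcnj p"
  by (cases p rule: prod_cases4; cases q rule: prod_cases4; simp add: hmult_def hcnj_def algebra_simps)

lemma norm_hcnj [simp]: "norm (hcnj p) = norm p"
  by (cases p rule: prod_cases4; simp add: hcnj_def norm_Pair)

lemma hone_neq_zero [simp]: "hone \<noteq> 0" and norm_hone [simp]: "norm hone = 1"
  by (auto simp: hone_def zero_prod_def norm_Pair)

lemma hmult_hinverse [simp]: "p \<noteq> 0 \<Longrightarrow> p \<star> hinverse p = hone"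
  and hinverse_hmult_self [simp]: "p \<noteq> 0 \<Longrightarrow> hinverse p \<star> p = hone"
  by (auto simp: hinverse_def hmult_hcnj)

lemma hinverse_hmult: "hinverse (p \<star> q) = hinverse q \<star> hinverse p"
  by (simp add: hinverse_def hcnj_hmult norm_hmult power_mult_distrib)

lemma norm_hinverse [simp]: "norm (hinverse p) = 1 / norm p"
  by (simp add: hinverse_def power2_eq_square)

lemma hinverse_hone [simp]: "hinverse hone = hone"
  by (simp add: hinverse_def hcnj_def hone_def norm_Pair)

lemma hinverse_hinverse [simp]: "hinverse (hinverse p) = p"
proof (cases "p = 0")
  case True
  then show ?thesis by (simp add: hinverse_def hcnj_def zero_prod_def)
next
  case False
  have "hcnj (hcnj p) = p"
    by (cases p rule: prod_cases4) (simp add: hcnj_def)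
  moreover have "hcnj (c *\<^sub>R x) = c *\<^sub>R hcnj x" for c x
    by (cases x rule: prod_cases4) (simp add: hcnj_def)
  ultimately show ?thesis
    using False by (simp add: hinverse_def power2_eq_square)
qed

lemma hmult_hinverse_cancel [simp]:
  "p \<noteq> 0 \<Longrightarrow> hinverse p \<star> (p \<star> x) = x"
  "p \<noteq> 0 \<Longrightarrow> p \<star> (hinverse p \<star> x) = x"
  "p \<noteq> 0 \<Longrightarrow> x \<star> p \<star> hinverse p = x"
  "p \<noteq> 0 \<Longrightarrow> x \<star> hinverse p \<star> p = x"
  by (simp_all add: hmult_assoc[symmetric]) (simp_all add: hmult_assoc)

lemma hmult_alt: "p \<star> q =
  (fst p * fst q - fst (snd p) * fst (snd q) - fst (snd (snd p)) * fst (snd (snd q)) - snd (snd (snd p)) * snd (snd (snd q)),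
   fst p * fst (snd q) + fst (snd p) * fst q + fst (snd (snd p)) * snd (snd (snd q)) - snd (snd (snd p)) * fst (snd (snd q)),
   fst p * fst (snd (snd q)) - fst (snd p) * snd (snd (snd q)) + fst (snd (snd p)) * fst q + snd (snd (snd p)) * fst (snd q),
   fst p * snd (snd (snd q)) + fst (snd p) * fst (snd (snd q)) - fst (snd (snd p)) * fst (snd q) + snd (snd (snd p)) * fst q)"
  by (cases p rule: prod_cases4; cases q rule: prod_cases4) (simp add: hmult_def)

lemma continuous_on_hmult [continuous_intros]:
  assumes "continuous_on S f" "continuous_on S g"
  shows "continuous_on S (\<lambda>x. f x \<star> g x)"
  unfolding hmult_alt by (intro continuous_intros assms)

lemma hprod_simps [simp]: "hprod [] = hone" "hprod (x # xs) = x \<star> hprod xs"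
  by (simp_all add: hprod_def)

lemma hprod_append: "hprod (xs @ ys) = hprod xs \<star> hprod ys"
  by (induction xs) (auto simp: hmult_assoc)

lemma norm_hprod: "norm (hprod xs) = prod_list (map norm xs)"
  by (induction xs) (auto simp: norm_hmult)

lemma norm_hprod_upt: "norm (hprod (map f [a..<b])) = (\<Prod>i\<in>{a..<b}. norm (f i))"
  by (simp add: norm_hprod prod.distinct_set_conv_list[symmetric])

lemma hprod_eq_0_iff: "hprod xs = 0 \<longleftrightarrow> (0::quat) \<in> set xs"
  by (induction xs) auto

lemma hprod_scaleR_hone: "hprod (map (\<lambda>i. c i *\<^sub>R hone) [0..<n]) = (\<Prod>i<n. c i) *\<^sub>R hone"
  by (induction n) (simp_all add: hprod_append mult.commute)

lemma continuous_on_hprod [continuous_intros]: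
  assumes "\<And>i. i \<in> set xs \<Longrightarrow> continuous_on S (f i)"
  shows "continuous_on S (\<lambda>x. hprod (map (\<lambda>i. f i x) xs))"
  using assms by (induction xs) (auto intro!: continuous_intros)

lemma hprod_telescope:
  assumes "\<And>i. a i \<noteq> 0"
  shows "hprod (map (\<lambda>i. a i \<star> q i \<star> hinverse (a (Suc i))) [s..<s + n])
       = a s \<star> hprod (map q [s..<s + n]) \<star> hinverse (a (s + n))"
proof (induction n)
  case (Suc n)
  have "hprod (map (\<lambda>i. a i \<star> q i \<star> hinverse (a (Suc i))) [s..<s + Suc n])
     = hprod (map (\<lambda>i. a i \<star> q i \<star> hinverse (a (Suc i))) [s..<s + n]) \<star>
       (a (s + n) \<star> q (s + n) \<star> hinverse (a (Suc (s + n))))"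
    by (simp add: hprod_append)
  also have "\<dots> = a s \<star> hprod (map q [s..<s + Suc n]) \<star> hinverse (a (s + Suc n))"
    using Suc assms by (simp add: hprod_append hmult_assoc)
  finally show ?case .
next
  case 0
  show ?case using assms by simp
qed

subsection \<open>Tuples with equal norms and equal products are gauge equivalent\<close>

definition tail_ratio :: "nat \<Rightarrow> (nat \<Rightarrow> quat) \<Rightarrow> (nat \<Rightarrow> quat) \<Rightarrow> nat \<Rightarrow> quat" where
  "tail_ratio k q q' i = hprod (map q' [i..<k]) \<star> hinverse (hprod (map q [i..<k]))"

primrec left_gauge :: "(nat \<Rightarrow> quat) \<Rightarrow> (nat \<Rightarrow> quat) \<Rightarrow> nat \<Rightarrow> quat" where
  "left_gauge q q' 0 = hone"
| "left_gauge q q' (Suc i) = (if q i = 0 then hone else hinverse (q' i) \<star> left_gauge q q' i \<star> q i)"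

lemma norm_tail_ratio:
  assumes "\<And>l. i \<le> l \<Longrightarrow> l < k \<Longrightarrow> q l \<noteq> 0" "\<And>l. l < k \<Longrightarrow> norm (q' l) = norm (q l)"
  shows "norm (tail_ratio k q q' i) = 1"
proof -
  have "norm (hprod (map q' [i..<k])) = norm (hprod (map q [i..<k]))"
    unfolding norm_hprod_upt using assms(2) by (intro prod.cong) auto
  moreover have "hprod (map q [i..<k]) \<noteq> 0"
    using assms(1) by (auto simp: hprod_eq_0_iff)
  ultimately show ?thesis
    by (simp add: tail_ratio_def norm_hmult)
qed

lemma tail_ratio_step:
  assumes "i < k" "\<And>l. i \<le> l \<Longrightarrow> l < k \<Longrightarrow> q l \<noteq> 0"
    and "\<And>l. l < k \<Longrightarrow> norm (q' l) = norm (q l)"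
  shows "q' i = tail_ratio k q q' i \<star> q i \<star> hinverse (tail_ratio k q q' (Suc i))"
proof -
  have split: "[i..<k] = i # [Suc i..<k]"
    using assms(1) by (simp add: upt_conv_Cons)
  have "q' l \<noteq> 0" if "i \<le> l" "l < k" for l
    using assms(2,3) that by (metis norm_eq_zero)
  then have "hprod (map q [Suc i..<k]) \<noteq> 0" "hprod (map q' [Suc i..<k]) \<noteq> 0" "q i \<noteq> 0"
    using assms by (auto simp: hprod_eq_0_iff)
  then show ?thesis
    unfolding tail_ratio_def split by (simp add: hinverse_hmult hmult_assoc)
qed

lemma norm_left_gauge:
  assumes "\<And>l. l < i \<Longrightarrow> norm (q' l) = norm (q l)"
  shows "norm (left_gauge q q' i) = 1"
  using assms by (induction i) (auto simp: norm_hmult)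

lemma left_gauge_step:
  assumes "norm (q' i) = norm (q i)" "left_gauge q q' i \<noteq> 0"
  shows "q' i = left_gauge q q' i \<star> q i \<star> hinverse (left_gauge q q' (Suc i))"
proof (cases "q i = 0")
  case False
  then have "q' i \<noteq> 0"
    using assms(1) by (metis norm_eq_zero)
  then show ?thesis
    using False assms(2) by (simp add: hinverse_hmult hmult_assoc)
qed (use assms in simp)

text \<open>The gauge is the ratio of tail products as long as these are invertible, and is
  propagated from the left through the last vanishing \<open>q\<^sub>i\<close>, where it may be reset.\<close>

definition connecting_gauge :: "nat \<Rightarrow> (nat \<Rightarrow> quat) \<Rightarrow> (nat \<Rightarrow> quat) \<Rightarrow> nat \<Rightarrow> quat" where
  "connecting_gauge k q q' i =
    (if \<forall>l. i \<le> l \<and> l < k \<longrightarrow> q l \<noteq> 0 then tail_ratio k q q' i else left_gauge q q' i)"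

lemma connecting_gauge_tail:
  "\<forall>l. i \<le> l \<and> l < k \<longrightarrow> q l \<noteq> 0 \<Longrightarrow> connecting_gauge k q q' i = tail_ratio k q q' i"
  unfolding connecting_gauge_def by (rule if_P)

lemma connecting_gauge_left:
  "\<not> (\<forall>l. i \<le> l \<and> l < k \<longrightarrow> q l \<noteq> 0) \<Longrightarrow> connecting_gauge k q q' i = left_gauge q q' i"
  unfolding connecting_gauge_def by (rule if_not_P)

lemma connecting_gauge_0:
  assumes "hprod (map q' [0..<k]) = hprod (map q [0..<k])"
  shows "connecting_gauge k q q' 0 = hone"
proof (cases "\<forall>l. 0 \<le> l \<and> l < k \<longrightarrow> q l \<noteq> 0")
  case True
  then have "hprod (map q [0..<k]) \<noteq> 0"
    by (auto simp: hprod_eq_0_iff)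
  with True show ?thesis
    by (simp add: connecting_gauge_tail tail_ratio_def assms)
qed (simp add: connecting_gauge_left)

lemma connecting_gauge_k: "connecting_gauge k q q' k = hone"
  by (auto simp: connecting_gauge_def tail_ratio_def)

lemma norm_connecting_gauge:
  assumes "\<And>l. l < k \<Longrightarrow> norm (q' l) = norm (q l)"
  shows "norm (connecting_gauge k q q' i) = 1"
proof (cases "\<forall>l. i \<le> l \<and> l < k \<longrightarrow> q l \<noteq> 0")
  case True
  then show ?thesis
    using norm_tail_ratio[of i k q q'] assms by (simp add: connecting_gauge_tail)
next
  case False
  then have "i < k"
    by auto
  with False show ?thesis
    using norm_left_gauge[of i q' q] assms by (simp add: connecting_gauge_left[OF False])
qed

lemma connecting_gauge_step:
  assumes norms: "\<And>l. l < k \<Longrightarrow> norm (q' l) = norm (q l)" and "i < k"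
  shows "q' i = connecting_gauge k q q' i \<star> q i \<star> hinverse (connecting_gauge k q q' (Suc i))"
proof (cases "\<forall>l. i \<le> l \<and> l < k \<longrightarrow> q l \<noteq> 0")
  case True
  then show ?thesis
    using tail_ratio_step[of i k q q'] \<open>i < k\<close> norms by (simp add: connecting_gauge_tail)
next
  case tail_vanishes: False
  show ?thesis
  proof (cases "q i = 0")
    case True
    then show ?thesis
      using norms[OF \<open>i < k\<close>] by simp
  next
    case False
    with tail_vanishes have "\<not> (\<forall>l. Suc i \<le> l \<and> l < k \<longrightarrow> q l \<noteq> 0)"
      by (metis Suc_leI le_neq_implies_less)
    moreover have "norm (connecting_gauge k q q' i) = 1"
      by (rule norm_connecting_gauge) (rule norms)
    then have "left_gauge q q' i \<noteq> 0"
      by (auto simp: connecting_gauge_left[OF tail_vanishes])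
    ultimately show ?thesis
      using left_gauge_step[of q' i q] norms[OF \<open>i < k\<close>]
      by (simp add: connecting_gauge_left tail_vanishes)
  qed
qed

lemma gauge_equivalent_if_hprod_eq:
  assumes "\<And>l. l < k \<Longrightarrow> norm (q' l) = norm (q l)"
    and "hprod (map q' [0..<k]) = hprod (map q [0..<k])"
  obtains a where "a 0 = hone" "a k = hone" "\<And>i. norm (a i) = 1"
    "\<And>i. i < k \<Longrightarrow> q' i = a i \<star> q i \<star> hinverse (a (Suc i))"
proof (rule that)
  show "connecting_gauge k q q' 0 = hone"
    using assms(2) by (rule connecting_gauge_0)
  show "norm (connecting_gauge k q q' i) = 1" for i
    using assms(1) by (rule norm_connecting_gauge)
  show "q' i = connecting_gauge k q q' i \<star> q i \<star> hinverse (connecting_gauge k q q' (Suc i))"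
    if "i < k" for i
    using assms(1) that by (rule connecting_gauge_step)
qed (rule connecting_gauge_k)

subsection \<open>The projection and its fibres\<close>

definition coord_sqnorm :: "(nat \<Rightarrow> nat) \<Rightarrow> (nat \<Rightarrow> (nat \<Rightarrow> real) \<times> quat) \<Rightarrow> nat \<Rightarrow> real" where
  "coord_sqnorm m p i = (\<Sum>j<m i - 3. (fst (p i) j)\<^sup>2)"

definition quat_product :: "nat \<Rightarrow> (nat \<Rightarrow> (nat \<Rightarrow> real) \<times> quat) \<Rightarrow> quat" where
  "quat_product k p = hprod (map (\<lambda>i. snd (p i)) [0..<k])"

definition proj_scale :: "nat \<Rightarrow> (nat \<Rightarrow> nat) \<Rightarrow> (nat \<Rightarrow> (nat \<Rightarrow> real) \<times> quat) \<Rightarrow> real" where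
  "proj_scale k m p = sqrt ((\<Sum>i<k. coord_sqnorm m p i) + (norm (quat_product k p))\<^sup>2)"

lemma orbit_proj_eq:
  "orbit_proj k m p =
    ((\<lambda>i j. fst (p i) j / proj_scale k m p), (1 / proj_scale k m p) *\<^sub>R quat_product k p)"
  by (simp add: orbit_proj_def proj_scale_def quat_product_def coord_sqnorm_def Let_def)

lemma sphere_prodD:
  assumes "p \<in> sphere_prod k m"
  shows "\<And>i. i < k \<Longrightarrow> coord_sqnorm m p i + (norm (snd (p i)))\<^sup>2 = 1"
    and "\<And>i. k \<le> i \<Longrightarrow> p i = ((\<lambda>_. 0), 0)"
    and "\<And>i j. i < k \<Longrightarrow> m i - 3 \<le> j \<Longrightarrow> fst (p i) j = 0"
  using assms by (auto simp: sphere_prod_def coord_sqnorm_def)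

lemma coord_sqnorm_nonneg: "0 \<le> coord_sqnorm m p i"
  by (simp add: coord_sqnorm_def sum_nonneg)

lemma norm_quat_product: "norm (quat_product k p) = (\<Prod>i<k. norm (snd (p i)))"
  by (simp add: quat_product_def norm_hprod_upt atLeast0LessThan)

text \<open>If all \<open>x\<^sub>i\<close> vanish, every \<open>q\<^sub>i\<close> is a unit quaternion and so is their product.\<close>

lemma proj_scale_pos:
  assumes "p \<in> sphere_prod k m"
  shows "0 < proj_scale k m p"
proof (rule ccontr)
  assume "\<not> 0 < proj_scale k m p"
  then have "(\<Sum>i<k. coord_sqnorm m p i) + (norm (quat_product k p))\<^sup>2 \<le> 0"
    by (simp add: proj_scale_def)
  then have sum0: "(\<Sum>i<k. coord_sqnorm m p i) = 0" and "norm (quat_product k p) = 0"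
    using sum_nonneg[of "{..<k}" "coord_sqnorm m p"] coord_sqnorm_nonneg[of m p]
    by (smt (verit) zero_le_power2 power_eq_0_iff)+
  moreover have "norm (snd (p i)) = 1" if "i < k" for i
  proof -
    have "coord_sqnorm m p i = 0"
      using sum0 that by (simp add: sum_nonneg_eq_0_iff coord_sqnorm_nonneg)
    then have "(norm (snd (p i)))\<^sup>2 = 1"
      using sphere_prodD(1)[OF assms that] by simp
    then show ?thesis
      using norm_ge_zero[of "snd (p i)"] by (auto simp: power2_eq_1_iff)
  qed
  ultimately show False
    by (simp add: norm_quat_product)
qed

text \<open>A point whose data \<open>(x, q\<^sub>1 \<cdots> q\<^sub>k)\<close> is \<open>c > 1\<close> times that of another point cannot
  lie on the product of spheres: the \<open>x\<^sub>i\<close> grow, so every \<open>|q\<^sub>i|\<close> and hence the norm of the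
  product would shrink.\<close>

lemma proportional_points_factor_le_1:
  assumes p: "p \<in> sphere_prod k m" and p': "p' \<in> sphere_prod k m" and "0 < c"
    and x: "\<And>i j. fst (p' i) j = c * fst (p i) j"
    and Q: "quat_product k p' = c *\<^sub>R quat_product k p"
  shows "c \<le> 1"
proof (rule ccontr)
  assume "\<not> c \<le> 1"
  then have c1: "1 < c" and c2: "1 < c\<^sup>2"
    by (simp_all add: one_less_power)
  have sq: "coord_sqnorm m p' i = c\<^sup>2 * coord_sqnorm m p i" for i
    by (simp add: coord_sqnorm_def x sum_distrib_left power_mult_distrib)
  show False
  proof (cases "quat_product k p = 0")
    case True
    then obtain i where i: "i < k" "snd (p i) = 0"
      by (auto simp: quat_product_def hprod_eq_0_iff)
    then have "coord_sqnorm m p' i = c\<^sup>2"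
      using sphere_prodD(1)[OF p i(1)] sq by simp
    then show False
      using sphere_prodD(1)[OF p' i(1)] c2 zero_le_power2[of "norm (snd (p' i))"] by linarith
  next
    case False
    have "norm (snd (p' i)) \<le> norm (snd (p i))" if "i < k" for i
    proof -
      have "(norm (snd (p' i)))\<^sup>2 \<le> (norm (snd (p i)))\<^sup>2"
        using sphere_prodD(1)[OF p that] sphere_prodD(1)[OF p' that] sq[of i] c2
          mult_right_mono[of 1 "c\<^sup>2" "coord_sqnorm m p i"] coord_sqnorm_nonneg[of m p i]
        by linarith
      then show ?thesis
        by (rule power2_le_imp_le[OF _ norm_ge_zero])
    qed
    then have "norm (quat_product k p') \<le> norm (quat_product k p)"
      unfolding norm_quat_product by (intro prod_mono) auto
    moreover have "norm (quat_product k p') = c * norm (quat_product k p)"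
      using Q \<open>0 < c\<close> by simp
    ultimately show False
      using False c1 mult_strict_right_mono[of 1 c "norm (quat_product k p)"] by simp
  qed
qed

lemma orbit_proj_eq_imp_proportional:
  assumes "orbit_proj k m p = orbit_proj k m p'"
    and "0 < proj_scale k m p" "0 < proj_scale k m p'"
  shows "fst (p' i) j = (proj_scale k m p' / proj_scale k m p) * fst (p i) j"
    and "quat_product k p' = (proj_scale k m p' / proj_scale k m p) *\<^sub>R quat_product k p"
proof -
  let ?N = "proj_scale k m p" and ?N' = "proj_scale k m p'"
  have "fst (p i) j / ?N = fst (p' i) j / ?N'"
    using fun_cong[OF fun_cong[OF arg_cong[OF assms(1), of fst]], of i j]
    by (simp add: orbit_proj_eq)
  then show "fst (p' i) j = (?N' / ?N) * fst (p i) j"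
    using assms(2,3) by (simp add: field_simps)
  have "(1 / ?N) *\<^sub>R quat_product k p = (1 / ?N') *\<^sub>R quat_product k p'"
    using arg_cong[OF assms(1), of snd] by (simp add: orbit_proj_eq)
  then have "?N' *\<^sub>R ((1 / ?N) *\<^sub>R quat_product k p) = quat_product k p'"
    using assms(3) by simp
  then show "quat_product k p' = (?N' / ?N) *\<^sub>R quat_product k p"
    by simp
qed

lemma orbit_proj_eq_imp_same_data:
  assumes p: "p \<in> sphere_prod k m" and p': "p' \<in> sphere_prod k m"
    and eq: "orbit_proj k m p = orbit_proj k m p'"
  shows "fst (p' i) = fst (p i)" and "quat_product k p' = quat_product k p"
    and "i < k \<Longrightarrow> norm (snd (p' i)) = norm (snd (p i))"
proof -
  let ?N = "proj_scale k m p" and ?N' = "proj_scale k m p'"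
  have N: "0 < ?N" "0 < ?N'"
    using proj_scale_pos p p' by auto
  have "?N' / ?N \<le> 1"
    using orbit_proj_eq_imp_proportional[OF eq N]
    by (intro proportional_points_factor_le_1[OF p p']) (use N in auto)
  moreover have "?N / ?N' \<le> 1"
    using orbit_proj_eq_imp_proportional[OF eq[symmetric] N(2,1)]
    by (intro proportional_points_factor_le_1[OF p' p]) (use N in auto)
  ultimately have "?N' = ?N"
    using N by (simp add: divide_le_eq_1)
  then show fst_eq: "fst (p' i) = fst (p i)" for i
    using orbit_proj_eq_imp_proportional(1)[OF eq N] N by auto
  show "quat_product k p' = quat_product k p"
    using orbit_proj_eq_imp_proportional(2)[OF eq N] N \<open>?N' = ?N\<close> by simp
  assume "i < k"
  have "coord_sqnorm m p' i = coord_sqnorm m p i"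
    by (simp add: coord_sqnorm_def fst_eq)
  then have "(norm (snd (p' i)))\<^sup>2 = (norm (snd (p i)))\<^sup>2"
    using sphere_prodD(1)[OF p \<open>i < k\<close>] sphere_prodD(1)[OF p' \<open>i < k\<close>] by linarith
  then show "norm (snd (p' i)) = norm (snd (p i))"
    by (rule power2_eq_imp_eq) simp_all
qed

definition boundary_gauge :: "nat \<Rightarrow> (nat \<Rightarrow> quat) \<Rightarrow> nat \<Rightarrow> quat" where
  "boundary_gauge k r i = (if i = 0 \<or> k \<le> i then hone else r (i - 1))"

lemma qt_act_eq:
  "qt_act k r p = (\<lambda>i. if i < k then
     (fst (p i), boundary_gauge k r i \<star> snd (p i) \<star> hinverse (boundary_gauge k r (Suc i)))
   else p i)"
proof (rule ext)
  fix i
  show "qt_act k r p i = (if i < k then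
     (fst (p i), boundary_gauge k r i \<star> snd (p i) \<star> hinverse (boundary_gauge k r (Suc i)))
   else p i)"
  proof (cases "i < k")
    case True
    then have "(if i = k - 1 then hone else r i) = boundary_gauge k r (Suc i)"
      and "(if i = 0 then hone else r (i - 1)) = boundary_gauge k r i"
      by (auto simp: boundary_gauge_def)
    with True show ?thesis
      by (simp add: qt_act_def)
  qed (simp add: qt_act_def)
qed

lemma orbit_proj_qt_act:
  assumes "r \<in> unit_tuples k"
  shows "orbit_proj k m (qt_act k r p) = orbit_proj k m p"
proof -
  let ?a = "boundary_gauge k r"
  have a_nonzero: "?a i \<noteq> 0" for i
  proof (cases "i = 0 \<or> k \<le> i")
    case False
    then have "norm (r (i - 1)) = 1"
      using assms by (auto simp: unit_tuples_def)
    with False show ?thesis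
      by (auto simp: boundary_gauge_def)
  qed (simp add: boundary_gauge_def)
  have "quat_product k (qt_act k r p)
      = hprod (map (\<lambda>i. ?a i \<star> snd (p i) \<star> hinverse (?a (Suc i))) [0..<0 + k])"
    unfolding quat_product_def by (intro arg_cong[where f = hprod] map_cong) (auto simp: qt_act_eq)
  also have "\<dots> = ?a 0 \<star> hprod (map (\<lambda>i. snd (p i)) [0..<0 + k]) \<star> hinverse (?a (0 + k))"
    using a_nonzero by (rule hprod_telescope)
  also have "\<dots> = quat_product k p"
    by (simp add: boundary_gauge_def quat_product_def)
  finally have "quat_product k (qt_act k r p) = quat_product k p" .
  moreover have "fst (qt_act k r p i) = fst (p i)" for i
    by (simp add: qt_act_def)
  ultimately show ?thesis
    by (simp add: orbit_proj_eq proj_scale_def coord_sqnorm_def)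
qed

lemma orbit_proj_eq_iff:
  assumes p: "p \<in> sphere_prod k m" and p': "p' \<in> sphere_prod k m"
  shows "orbit_proj k m p = orbit_proj k m p' \<longleftrightarrow> (\<exists>r\<in>unit_tuples k. p' = qt_act k r p)"
proof
  assume eq: "orbit_proj k m p = orbit_proj k m p'"
  note same = orbit_proj_eq_imp_same_data[OF p p' eq]
  obtain a where a: "a 0 = hone" "a k = hone" "\<And>i. norm (a i) = 1"
    and gauge: "\<And>i. i < k \<Longrightarrow> snd (p' i) = a i \<star> snd (p i) \<star> hinverse (a (Suc i))"
    using gauge_equivalent_if_hprod_eq[of k "\<lambda>i. snd (p' i)" "\<lambda>i. snd (p i)"] same(2,3)
    unfolding quat_product_def by blast
  define r where "r i = a (Suc i)" for i
  have a_eq: "boundary_gauge k r i = a i" if "i \<le> k" for i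
    using that a(1,2) by (auto simp: boundary_gauge_def r_def)
  have "p' i = qt_act k r p i" for i
  proof (cases "i < k")
    case True
    then have "qt_act k r p i = (fst (p' i), snd (p' i))"
      using gauge[OF True] same(1)[of i] a_eq[of i] a_eq[of "Suc i"] by (simp add: qt_act_eq)
    then show ?thesis
      by simp
  qed (simp add: qt_act_eq sphere_prodD(2)[OF p] sphere_prodD(2)[OF p'])
  then have "p' = qt_act k r p" ..
  moreover have "r \<in> unit_tuples k"
    using a(3) by (simp add: unit_tuples_def r_def)
  ultimately show "\<exists>r\<in>unit_tuples k. p' = qt_act k r p"
    by blast
next
  assume "\<exists>r\<in>unit_tuples k. p' = qt_act k r p"
  then obtain r where "r \<in> unit_tuples k" "p' = qt_act k r p" ..
  then show "orbit_proj k m p = orbit_proj k m p'"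
    by (simp add: orbit_proj_qt_act)
qed

subsection \<open>The image is the target sphere\<close>

lemma orbit_proj_in_target_sphere:
  assumes p: "p \<in> sphere_prod k m"
  shows "orbit_proj k m p \<in> target_sphere k m"
proof -
  let ?N = "proj_scale k m p"
  have N: "0 < ?N"
    using proj_scale_pos[OF p] .
  have N2: "?N\<^sup>2 = (\<Sum>i<k. coord_sqnorm m p i) + (norm (quat_product k p))\<^sup>2"
    unfolding proj_scale_def by (rule real_sqrt_pow2) (simp add: sum_nonneg coord_sqnorm_nonneg)
  have zero: "fst (p i) j = 0" if "k \<le> i \<or> m i - 3 \<le> j" for i j
    using that sphere_prodD(2,3)[OF p] by (cases "k \<le> i") auto
  have "(\<Sum>i<k. \<Sum>j<m i - 3. (fst (p i) j / ?N)\<^sup>2) + (norm ((1 / ?N) *\<^sub>R quat_product k p))\<^sup>2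
      = ((\<Sum>i<k. coord_sqnorm m p i) + (norm (quat_product k p))\<^sup>2) / ?N\<^sup>2"
    by (simp add: coord_sqnorm_def power_divide sum_divide_distrib add_divide_distrib
        power_mult_distrib)
  also have "\<dots> = 1"
    by (subst N2[symmetric]) (use N in simp)
  finally show ?thesis
    unfolding target_sphere_def orbit_proj_eq using zero by auto
qed

text \<open>The preimage of \<open>(y, Y)\<close> constructed below is \<open>(t y, q)\<close> with \<open>|q\<^sub>i| = \<surd>(1 - t\<^sup>2|y\<^sub>i|\<^sup>2)\<close>;
  its product has the right direction, and the right norm \<open>t |Y|\<close> exactly for the scale \<open>t\<close>
  provided here.\<close>

lemma exists_scale_eq_prod_sqrt:
  fixes a :: "nat \<Rightarrow> real" and y :: real
  assumes "\<And>i. 0 \<le> a i" "0 \<le> y" "(\<Sum>i<k. a i) + y\<^sup>2 = 1"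
  shows "\<exists>t>0. (\<forall>i<k. t\<^sup>2 * a i \<le> 1) \<and> t * y = (\<Prod>i<k. sqrt (1 - t\<^sup>2 * a i))"
proof (cases "\<forall>i<k. a i = 0")
  case True
  then have "y = 1"
    using assms(2,3) by (simp add: power2_eq_1_iff)
  with True show ?thesis
    by (intro exI[of _ 1]) simp
next
  case False
  define M where "M = Max (a ` {..<k})"
  have a_le_M: "a i \<le> M" if "i < k" for i
    using that by (simp add: M_def)
  have "M \<in> a ` {..<k}"
    unfolding M_def using False by (intro Max_in) auto
  then obtain i1 where i1: "i1 < k" "a i1 = M"
    by auto
  have "0 < M"
    using False a_le_M assms(1) by (metis less_eq_real_def order.strict_trans2)
  define T where "T = 1 / sqrt M"
  have T: "0 < T" "T\<^sup>2 = 1 / M"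
    using \<open>0 < M\<close> by (simp_all add: T_def power_divide)
  have bound: "t\<^sup>2 * a i \<le> 1" if "0 \<le> t" "t \<le> T" "i < k" for t i
  proof -
    have "t\<^sup>2 * a i \<le> T\<^sup>2 * M"
      using that a_le_M[OF that(3)] assms(1) by (meson mult_mono power_mono zero_le_power2 order_trans)
    then show ?thesis
      using T \<open>0 < M\<close> by simp
  qed
  define g where "g t = t * y - (\<Prod>i<k. sqrt (1 - t\<^sup>2 * a i))" for t
  have vanish_at_T: "(\<Prod>i<k. sqrt (1 - T\<^sup>2 * a i)) = 0"
    using i1 T \<open>0 < M\<close> by (intro prod_zero) auto
  have "0 \<le> g T"
    unfolding g_def vanish_at_T using T(1) assms(2) by simp
  moreover have "g 0 \<le> 0"
    by (simp add: g_def)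
  moreover have "continuous_on {0..T} g"
    unfolding g_def by (intro continuous_intros)
  ultimately obtain t where t: "0 \<le> t" "t \<le> T" "g t = 0"
    using IVT'[of g 0 0 T] T by auto
  moreover have "t \<noteq> 0"
    using t by (auto simp: g_def)
  ultimately show ?thesis
    using bound by (intro exI[of _ t]) (auto simp: g_def)
qed

lemma exists_hprod_with_norms:
  assumes "0 < n" "\<And>i. i < n \<Longrightarrow> 0 \<le> s i" "norm Y = (\<Prod>i<n. s i)"
  obtains q where "\<And>i. i < n \<Longrightarrow> norm (q i) = s i" "hprod (map q [0..<n]) = Y"
proof -
  obtain n' where n: "n = Suc n'"
    using assms(1) by (cases n) auto
  define q where "q i = (if i = n' \<and> Y \<noteq> 0 then (s i / norm Y) *\<^sub>R Y else s i *\<^sub>R hone)" for i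
  have norms: "norm (q i) = s i" if "i < n" for i
    using assms(2)[OF that] by (auto simp: q_def)
  have map_q: "map q [0..<n'] = map (\<lambda>i. s i *\<^sub>R hone) [0..<n']"
    by (auto simp: q_def)
  have "hprod (map q [0..<n]) = hprod (map q [0..<n']) \<star> q n'"
    by (simp add: n hprod_append)
  also have "\<dots> = hprod (map (\<lambda>i. s i *\<^sub>R hone) [0..<n']) \<star> q n'"
    unfolding map_q ..
  also have "\<dots> = (\<Prod>i<n'. s i) *\<^sub>R q n'"
    by (simp add: hprod_scaleR_hone)
  also have "\<dots> = Y"
  proof (cases "Y = 0")
    case True
    then have "(\<Prod>i<n'. s i) * s n' = 0"
      using assms(3) by (simp add: n)
    with True show ?thesis
      by (simp add: q_def)
  next
    case False
    have "norm Y = (\<Prod>i<n'. s i) * s n'"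
      using assms(3) by (simp add: n)
    with False have one: "(\<Prod>i<n'. s i) * (s n' / norm Y) = 1"
      by (metis divide_self norm_eq_zero times_divide_eq_right)
    have "(\<Prod>i<n'. s i) *\<^sub>R q n' = ((\<Prod>i<n'. s i) * (s n' / norm Y)) *\<^sub>R Y"
      using False by (simp add: q_def)
    then show ?thesis
      unfolding one by simp
  qed
  finally show thesis
    using that norms by blast
qed

lemma target_sphere_subset_orbit_proj_image:
  assumes y: "y \<in> target_sphere k m" and "0 < k"
  shows "y \<in> orbit_proj k m ` sphere_prod k m"
proof -
  define a where "a i = (\<Sum>j<m i - 3. (fst y i j)\<^sup>2)" for i
  have y_zero: "fst y i j = 0" if "k \<le> i \<or> m i - 3 \<le> j" for i j
    using y that unfolding target_sphere_def by blast
  have y_sphere: "(\<Sum>i<k. a i) + (norm (snd y))\<^sup>2 = 1"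
    using y by (simp add: target_sphere_def a_def)
  obtain t where t: "0 < t" "\<forall>i<k. t\<^sup>2 * a i \<le> 1"
    and t_norm: "t * norm (snd y) = (\<Prod>i<k. sqrt (1 - t\<^sup>2 * a i))"
    using exists_scale_eq_prod_sqrt[OF _ norm_ge_zero y_sphere] by (auto simp: a_def sum_nonneg)
  obtain q where q_norm: "\<And>i. i < k \<Longrightarrow> norm (q i) = sqrt (1 - t\<^sup>2 * a i)"
    and q_prod: "hprod (map q [0..<k]) = t *\<^sub>R snd y"
    using exists_hprod_with_norms[of k "\<lambda>i. sqrt (1 - t\<^sup>2 * a i)" "t *\<^sub>R snd y"]
      \<open>0 < k\<close> t t_norm by auto
  define p where "p i = (if i < k then ((\<lambda>j. t * fst y i j), q i) else ((\<lambda>_. 0), 0))" for i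
  have sq: "coord_sqnorm m p i = t\<^sup>2 * a i" if "i < k" for i
    using that by (simp add: coord_sqnorm_def p_def a_def power_mult_distrib sum_distrib_left)
  have "p \<in> sphere_prod k m"
    unfolding sphere_prod_def
  proof (intro CollectI conjI allI impI)
    fix i assume "i < k"
    then show "(\<Sum>j<m i - 3. (fst (p i) j)\<^sup>2) + (norm (snd (p i)))\<^sup>2 = 1"
      using sq[of i] q_norm[of i] t(2) by (simp add: coord_sqnorm_def p_def)
  qed (use y_zero in \<open>auto simp: p_def\<close>)
  moreover have Q: "quat_product k p = t *\<^sub>R snd y"
    unfolding quat_product_def q_prod[symmetric] by (intro arg_cong[where f = hprod]) (simp add: p_def)
  moreover have "proj_scale k m p = t"
  proof -
    have "(\<Sum>i<k. coord_sqnorm m p i) + (norm (quat_product k p))\<^sup>2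
        = t\<^sup>2 * ((\<Sum>i<k. a i) + (norm (snd y))\<^sup>2)"
      by (simp add: sq Q sum_distrib_left sum_distrib_right algebra_simps power_mult_distrib)
    then show ?thesis
      using y_sphere t(1) by (simp add: proj_scale_def)
  qed
  moreover have "(\<lambda>i j. fst (p i) j / t) = fst y"
  proof (intro ext)
    fix i j
    show "fst (p i) j / t = fst y i j"
      using t(1) y_zero[of i j] by (simp add: p_def)
  qed
  ultimately have "orbit_proj k m p = y"
    using t(1) by (simp add: orbit_proj_eq)
  with \<open>p \<in> sphere_prod k m\<close> show ?thesis
    by blast
qed

lemma orbit_proj_image:
  "0 < k \<Longrightarrow> orbit_proj k m ` sphere_prod k m = target_sphere k m"
  using orbit_proj_in_target_sphere target_sphere_subset_orbit_proj_image by blast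

subsection \<open>Topology\<close>

lemma continuous_on_component [continuous_intros]:
  "continuous_on S (\<lambda>p :: nat \<Rightarrow> 'a :: topological_space. p i)"
  by (rule continuous_on_subset[OF continuous_on_product_coordinates]) simp

lemma continuous_on_component_fst [continuous_intros]:
  "continuous_on S (\<lambda>p :: nat \<Rightarrow> (nat \<Rightarrow> real) \<times> quat. fst (p i) j)"
  by (rule continuous_on_product_then_coordinatewise) (intro continuous_intros)

lemma continuous_on_orbit_proj: "continuous_on (sphere_prod k m) (orbit_proj k m)"
proof -
  have "continuous_on (sphere_prod k m) (proj_scale k m)"
    unfolding proj_scale_def coord_sqnorm_def quat_product_def by (intro continuous_intros)
  moreover have "\<forall>p\<in>sphere_prod k m. proj_scale k m p \<noteq> 0"
    using proj_scale_pos by force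
  ultimately show ?thesis
    unfolding orbit_proj_eq[abs_def]
    by (intro continuous_on_Pair continuous_on_coordinatewise_then_product continuous_on_divide
        continuous_on_scaleR) (auto simp: quat_product_def intro!: continuous_intros)
qed

lemma closed_sphere_prod: "closed (sphere_prod k m)"
proof -
  have "sphere_prod k m = (\<Inter>i\<in>{k..}. {p. p i = ((\<lambda>_. 0), 0)}) \<inter>
    (\<Inter>i\<in>{..<k}. (\<Inter>j\<in>{m i - 3..}. {p. fst (p i) j = 0}) \<inter>
        {p. (\<Sum>j<m i - 3. (fst (p i) j)\<^sup>2) + (norm (snd (p i)))\<^sup>2 = 1})"
    by (auto simp: sphere_prod_def)
  also have "closed \<dots>"
    by (intro closed_Int closed_INT ballI closed_Collect_eq continuous_intros)
  finally show ?thesis .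
qed

lemma sphere_prod_bounded_components:
  assumes p: "p \<in> sphere_prod k m"
  shows "\<bar>fst (p i) j\<bar> \<le> 1 \<and> norm (snd (p i)) \<le> 1"
proof (cases "i < k")
  case True
  have sphere: "coord_sqnorm m p i + (norm (snd (p i)))\<^sup>2 = 1"
    using sphere_prodD(1)[OF p True] .
  have "(fst (p i) j)\<^sup>2 \<le> coord_sqnorm m p i"
  proof (cases "j < m i - 3")
    case True
    then show ?thesis
      unfolding coord_sqnorm_def by (intro member_le_sum) auto
  qed (use sphere_prodD(3)[OF p \<open>i < k\<close>] coord_sqnorm_nonneg in auto)
  then have "(fst (p i) j)\<^sup>2 \<le> 1" "(norm (snd (p i)))\<^sup>2 \<le> 1"
    using sphere coord_sqnorm_nonneg[of m p i] zero_le_power2[of "norm (snd (p i))"] by linarith+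
  then show ?thesis
    by (simp add: abs_square_le_1)
qed (simp add: sphere_prodD(2)[OF p])

lemma compact_sphere_prod: "compact (sphere_prod k m)"
proof -
  define K where "K = PiE UNIV (\<lambda>_::nat. {-1..1::real}) \<times> cball (0::quat) 1"
  have "compactin (product_topology (\<lambda>_. euclidean) UNIV) (PiE UNIV (\<lambda>_::nat. {-1..1::real}))"
    by (simp add: compactin_PiE)
  then have "compact (PiE UNIV (\<lambda>_::nat. {-1..1::real}))"
    by (simp add: euclidean_product_topology)
  then have "compact K"
    unfolding K_def by (intro compact_Times) auto
  then have "compactin (product_topology (\<lambda>_. euclidean) UNIV) (PiE UNIV (\<lambda>_::nat. K))"
    by (simp add: compactin_PiE)
  then have "compact (PiE UNIV (\<lambda>_::nat. K))"
    by (simp add: euclidean_product_topology)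
  moreover have "sphere_prod k m \<subseteq> PiE UNIV (\<lambda>_. K)"
    using sphere_prod_bounded_components
    by (fastforce simp: K_def PiE_iff mem_Times_iff abs_le_iff)
  ultimately show ?thesis
    using closed_sphere_prod by (metis compact_Int_closed inf.absorb_iff2)
qed

lemma quotient_map_orbit_proj:
  assumes "0 < k"
  shows "quotient_map (top_of_set (sphere_prod k m)) (top_of_set (target_sphere k m)) (orbit_proj k m)"
proof (rule continuous_imp_quotient_map)
  show "continuous_map (top_of_set (sphere_prod k m)) (top_of_set (target_sphere k m)) (orbit_proj k m)"
    using continuous_on_orbit_proj orbit_proj_in_target_sphere by auto
  show "compact_space (top_of_set (sphere_prod k m))"
    by (rule compact_space_subtopology) (simp add: compact_sphere_prod)
  show "Hausdorff_space (top_of_set (target_sphere k m))"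
    by (simp add: Hausdorff_space_subtopology)
  show "orbit_proj k m ` topspace (top_of_set (sphere_prod k m)) = topspace (top_of_set (target_sphere k m))"
    using orbit_proj_image[OF assms] by simp
qed

theorem theorem3:
  fixes k :: nat and m :: "nat \<Rightarrow> nat"
  assumes "k \<ge> 2" and "\<forall>i<k. m i \<ge> 4"
  shows "continuous_on (sphere_prod k m) (orbit_proj k m)
    \<and> quotient_map (top_of_set (sphere_prod k m)) (top_of_set (target_sphere k m)) (orbit_proj k m)
    \<and> (\<forall>p\<in>sphere_prod k m. \<forall>p'\<in>sphere_prod k m.
          orbit_proj k m p = orbit_proj k m p' \<longleftrightarrow> (\<exists>r\<in>unit_tuples k. p' = qt_act k r p))"
  using continuous_on_orbit_proj quotient_map_orbit_proj orbit_proj_eq_iff assms(1) by simp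

end
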